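(* Fix $a>0$ and $\mu>0$. For $\beta>0$, let $W$ be a standard Brownian motion and let $q^+$ be the solution of $\mathrm{d}q^+(t)=\mathrm{d}W(t)+\frac14\big(a-e^{q^+(t)/\beta}-e^{-(q^+(t)+t/4+\mu)/\beta}\big)\mathrm{d}t$ started from $q^+(0)=+\infty$, and let $\xi^+$ be its first explosion time to $-\infty$. Then for $\beta$ small enough, for all $t>0$, $\mathbb{P}(\xi^+>t)\geq 1-4e^{-\mu^2/(32t)}$. *)

theory Defs
  imports "HOL-Probability.Probability"
begin

definition std_BM :: "'a measure \<Rightarrow> (real \<Rightarrow> 'a \<Rightarrow> real) \<Rightarrow> bool" where
  "std_BM M W \<longleftrightarrow>
     prob_space M \<and>
     (\<forall>t\<ge>0. W t \<in> borel_measurable M) \<and>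
     (\<forall>\<omega>\<in>space M. W 0 \<omega> = 0) \<and>
     (AE \<omega> in M. continuous_on {0..} (\<lambda>t. W t \<omega>)) \<and>
     (\<forall>s t. 0 \<le> s \<and> s < t \<longrightarrow>
        distributed M lborel (\<lambda>\<omega>. W t \<omega> - W s \<omega>)
          (\<lambda>x. ennreal (normal_density 0 (sqrt (t - s)) x))) \<and>
     (\<forall>(ts :: nat \<Rightarrow> real) n. 0 \<le> ts 0 \<and> strict_mono ts \<longrightarrow>
        prob_space.indep_vars M (\<lambda>_. borel)
          (\<lambda>i \<omega>. W (ts (Suc i)) \<omega> - W (ts i) \<omega>) {..<n})"

definition drift :: "real \<Rightarrow> real \<Rightarrow> real \<Rightarrow> real \<Rightarrow> real \<Rightarrow> real" where
  "drift a \<mu> \<beta> r x = (a - exp (x / \<beta>) - exp (- (x + r / 4 + \<mu>) / \<beta>)) / 4"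

text \<open>Since the noise is additive, the SDE is the pathwise integral equation below.\<close>
definition entrance_sol ::
  "real \<Rightarrow> real \<Rightarrow> real \<Rightarrow> 'a measure \<Rightarrow> (real \<Rightarrow> 'a \<Rightarrow> real)
     \<Rightarrow> (real \<Rightarrow> 'a \<Rightarrow> real) \<Rightarrow> ('a \<Rightarrow> ereal) \<Rightarrow> bool" where
  "entrance_sol a \<mu> \<beta> M W q \<xi> \<longleftrightarrow>
     \<xi> \<in> borel_measurable M \<and>
     (AE \<omega> in M.
        0 < \<xi> \<omega> \<and>
        continuous_on {t. 0 < t \<and> ereal t < \<xi> \<omega>} (\<lambda>t. q t \<omega>) \<and>
        (\<forall>s t. 0 < s \<and> s \<le> t \<and> ereal t < \<xi> \<omega> \<longrightarrow>
           q t \<omega> = q s \<omega> + (W t \<omega> - W s \<omega>)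
                     + integral {s..t} (\<lambda>r. drift a \<mu> \<beta> r (q r \<omega>))) \<and>
        filterlim (\<lambda>t. q t \<omega>) at_top (at_right 0) \<and>
        (\<xi> \<omega> < \<infinity> \<longrightarrow>
           filterlim (\<lambda>t. q t \<omega>) at_bot (at_left (real_of_ereal (\<xi> \<omega>)))))"

end

theory Submission
  imports Defs
begin

text \<open>On the event that \<open>\<bar>W\<bar> \<le> c\<close> on \<open>[0, t]\<close> with \<open>c < \<mu>/4\<close>, the solution cannot explode before
  time \<open>t\<close>: coming down from \<open>+\<infinity>\<close> to \<open>-\<infinity>\<close> it must cross the band \<open>[-3\<mu>/4, -\<mu>/4]\<close>, on which
  the drift is nonnegative once \<open>\<beta>\<close> is small, so during the crossing \<open>q\<close> can fall by at most the
  oscillation \<open>2c < \<mu>/2\<close> of the noise, which is less than the width of the band.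
  By Doob's maximal inequality for the exponential martingale \<open>exp (\<lambda> W - \<lambda>\<^sup>2 s / 2)\<close> on
  dyadic grids and continuity of the paths, this event has probability at least
  \<open>1 - 2 exp (-c\<^sup>2 / (2t))\<close>; taking \<open>c\<^sup>2\<close> close enough to \<open>\<mu>\<^sup>2/16\<close> gives the bound.\<close>

lemma normal_density_mult_exp:
  assumes "0 < T"
  shows "normal_density 0 (sqrt T) x * exp (\<theta> * x) = exp (\<theta>\<^sup>2 * T / 2) * normal_density (\<theta> * T) (sqrt T) x"
proof -
  have sq: "(sqrt T)\<^sup>2 = T" using assms by simp
  have exponent: "- (x - 0)\<^sup>2 / (2 * T) + \<theta> * x = \<theta>\<^sup>2 * T / 2 + (- (x - \<theta> * T)\<^sup>2 / (2 * T))"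
    using assms by (simp add: divide_simps power2_eq_square) (simp add: algebra_simps)
  have "normal_density 0 (sqrt T) x * exp (\<theta> * x) = 1 / sqrt (2 * pi * T) * exp (- (x - 0)\<^sup>2 / (2 * T) + \<theta> * x)"
    unfolding normal_density_def sq exp_add by (simp only: mult.assoc)
  also have "\<dots> = exp (\<theta>\<^sup>2 * T / 2) * normal_density (\<theta> * T) (sqrt T) x"
    unfolding normal_density_def sq exponent exp_add by (simp only: mult_ac)
  finally show ?thesis .
qed

lemma nn_integral_exp_normal:
  assumes D: "distributed M lborel Y (\<lambda>x. ennreal (normal_density 0 (sqrt T) x))" and T: "0 < T"
  shows "(\<integral>\<^sup>+\<omega>. ennreal (exp (\<theta> * Y \<omega>)) \<partial>M) = ennreal (exp (\<theta>\<^sup>2 * T / 2))"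
proof -
  have "(\<integral>\<^sup>+\<omega>. ennreal (exp (\<theta> * Y \<omega>)) \<partial>M)
      = (\<integral>\<^sup>+x. ennreal (normal_density 0 (sqrt T) x) * ennreal (exp (\<theta> * x)) \<partial>lborel)"
    using distributed_nn_integral[OF D, of "\<lambda>x. ennreal (exp (\<theta> * x))"] by simp
  also have "\<dots> = (\<integral>\<^sup>+x. ennreal (exp (\<theta>\<^sup>2 * T / 2)) * ennreal (normal_density (\<theta> * T) (sqrt T) x) \<partial>lborel)"
    by (intro nn_integral_cong) (simp add: ennreal_mult''[symmetric] normal_density_mult_exp[OF T])
  also have "\<dots> = ennreal (exp (\<theta>\<^sup>2 * T / 2)) * (\<integral>\<^sup>+x. ennreal (normal_density (\<theta> * T) (sqrt T) x) \<partial>lborel)"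
    by (rule nn_integral_cmult) auto
  also have "\<dots> = ennreal (exp (\<theta>\<^sup>2 * T / 2))"
    using T by (subst nn_integral_eq_integral) auto
  finally show ?thesis .
qed

lemma (in prob_space) indep_var_nn_integral:
  fixes X Y :: "'a \<Rightarrow> ennreal"
  assumes "indep_var borel X borel Y"
  shows "(\<integral>\<^sup>+\<omega>. X \<omega> * Y \<omega> \<partial>M) = (\<integral>\<^sup>+\<omega>. X \<omega> \<partial>M) * (\<integral>\<^sup>+\<omega>. Y \<omega> \<partial>M)"
proof -
  have "case_bool borel borel = (\<lambda>_::bool. borel :: ennreal measure)"
    by (auto simp: fun_eq_iff split: bool.split)
  then have "indep_vars (\<lambda>_. borel) (case_bool X Y) UNIV"
    using assms unfolding indep_var_def by simp
  from indep_vars_nn_integral[OF _ this] show ?thesis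
    by (simp add: UNIV_bool mult.commute)
qed

lemma std_BMD:
  assumes "std_BM M W"
  shows "prob_space M"
    and "\<And>t. 0 \<le> t \<Longrightarrow> W t \<in> borel_measurable M"
    and "\<And>\<omega>. \<omega> \<in> space M \<Longrightarrow> W 0 \<omega> = 0"
    and "AE \<omega> in M. continuous_on {0..} (\<lambda>t. W t \<omega>)"
    and "\<And>s t. 0 \<le> s \<Longrightarrow> s < t \<Longrightarrow> distributed M lborel (\<lambda>\<omega>. W t \<omega> - W s \<omega>)
           (\<lambda>x. ennreal (normal_density 0 (sqrt (t - s)) x))"
    and "\<And>ts n. 0 \<le> ts 0 \<Longrightarrow> strict_mono ts \<Longrightarrow> prob_space.indep_vars M (\<lambda>_. borel)
           (\<lambda>i \<omega>. W (ts (Suc i)) \<omega> - W (ts i) \<omega>) {..<n}"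
  using assms unfolding std_BM_def by blast+

lemma std_BM_nn_integral_exp:
  assumes "std_BM M W" and "0 < T"
  shows "(\<integral>\<^sup>+\<omega>. ennreal (exp (\<theta> * W T \<omega>)) \<partial>M) = ennreal (exp (\<theta>\<^sup>2 * T / 2))"
proof -
  have "distributed M lborel (\<lambda>\<omega>. W T \<omega> - W 0 \<omega>) (\<lambda>x. ennreal (normal_density 0 (sqrt T) x))"
    using std_BMD(5)[OF assms(1), of 0 T] assms(2) by simp
  from nn_integral_exp_normal[OF this assms(2)] show ?thesis
    by (simp cong: nn_integral_cong_simp add: std_BMD(3)[OF assms(1)])
qed

definition grid_increments :: "(real \<Rightarrow> 'a \<Rightarrow> real) \<Rightarrow> (nat \<Rightarrow> real) \<Rightarrow> nat \<Rightarrow> 'a \<Rightarrow> nat \<Rightarrow> real" where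
  "grid_increments W tt k \<omega> = (\<lambda>i\<in>{..<k}. W (tt (Suc i)) \<omega> - W (tt i) \<omega>)"

lemma std_BM_grid_eq_sum_increments:
  assumes "std_BM M W" "tt 0 = 0" "\<omega> \<in> space M" "j \<le> k"
  shows "W (tt j) \<omega> = (\<Sum>i<j. grid_increments W tt k \<omega> i)"
proof -
  have "(\<Sum>i<j. grid_increments W tt k \<omega> i) = (\<Sum>i<j. W (tt (Suc i)) \<omega> - W (tt i) \<omega>)"
    using assms(4) by (intro sum.cong) (auto simp: grid_increments_def)
  also have "\<dots> = W (tt j) \<omega>"
    using sum_lessThan_telescope[of "\<lambda>i. W (tt i) \<omega>" j] std_BMD(3)[OF assms(1,3)] assms(2) by simp
  finally show ?thesis by simp
qed

lemma std_BM_indep_grid_increments: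
  assumes BM: "std_BM M W" and tt: "strict_mono tt" "tt 0 = 0" and "k < N"
  shows "prob_space.indep_var M (PiM {..<k} (\<lambda>_. borel)) (grid_increments W tt k)
           (PiM {k} (\<lambda>_. borel)) (\<lambda>\<omega>. \<lambda>i\<in>{k}. W (tt N) \<omega> - W (tt k) \<omega>)"
proof -
  interpret prob_space M using std_BMD(1)[OF BM] .
  \<comment> \<open>Agrees with \<open>tt\<close> up to \<open>k\<close>; its \<open>k\<close>-th increment runs from \<open>tt k\<close> to \<open>tt N\<close>.\<close>
  define ts where "ts i = (if i \<le> k then tt i else tt N + real (i - Suc k))" for i
  have "tt k < tt N" using tt(1) \<open>k < N\<close> by (simp add: strict_mono_less)
  have "strict_mono ts"
  proof (rule strict_monoI_Suc)
    fix i show "ts i < ts (Suc i)"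
      using \<open>tt k < tt N\<close> tt(1) by (cases "i = k") (auto simp: ts_def strict_mono_Suc_iff)
  qed
  moreover have "0 \<le> ts 0" using tt(2) by (simp add: ts_def)
  ultimately have "indep_vars (\<lambda>_. borel) (\<lambda>i \<omega>. W (ts (Suc i)) \<omega> - W (ts i) \<omega>) {..<Suc k}"
    using std_BMD(6)[OF BM] by blast
  then have "indep_var (PiM {..<k} (\<lambda>_. borel)) (\<lambda>\<omega>. \<lambda>i\<in>{..<k}. W (ts (Suc i)) \<omega> - W (ts i) \<omega>)
      (PiM {k} (\<lambda>_. borel)) (\<lambda>\<omega>. \<lambda>i\<in>{k}. W (ts (Suc i)) \<omega> - W (ts i) \<omega>)"
    by (rule indep_var_restrict) auto
  then show ?thesis
    by (simp add: ts_def grid_increments_def[abs_def] cong: restrict_cong)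
qed

lemma std_BM_nn_integral_mult_exp_increment:
  assumes BM: "std_BM M W" and tt: "strict_mono tt" "tt 0 = 0" and "k \<le> N"
    and F[measurable]: "F \<in> borel_measurable (PiM {..<k} (\<lambda>_. borel))"
  shows "(\<integral>\<^sup>+\<omega>. F (grid_increments W tt k \<omega>) * ennreal (exp (\<theta> * (W (tt N) \<omega> - W (tt k) \<omega>))) \<partial>M)
       = (\<integral>\<^sup>+\<omega>. F (grid_increments W tt k \<omega>) \<partial>M) * ennreal (exp (\<theta>\<^sup>2 * (tt N - tt k) / 2))"
proof (cases "k = N")
  case False
  interpret prob_space M using std_BMD(1)[OF BM] .
  have "k < N" "tt k < tt N" "0 \<le> tt k"
    using False \<open>k \<le> N\<close> tt strict_mono_less[OF tt(1)] strict_mono_less_eq[OF tt(1), of 0 k] by auto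
  have [measurable]: "W (tt j) \<in> borel_measurable M" for j
    using std_BMD(2)[OF BM] strict_mono_less_eq[OF tt(1), of 0 j] tt(2) by simp
  have "indep_var borel (F \<circ> grid_increments W tt k)
      borel ((\<lambda>x. ennreal (exp (\<theta> * x k))) \<circ> (\<lambda>\<omega>. \<lambda>i\<in>{k}. W (tt N) \<omega> - W (tt k) \<omega>))"
    by (rule indep_var_compose[OF std_BM_indep_grid_increments[OF BM tt \<open>k < N\<close>] F]) measurable
  then show ?thesis
    using nn_integral_exp_normal[OF std_BMD(5)[OF BM \<open>0 \<le> tt k\<close> \<open>tt k < tt N\<close>]] \<open>tt k < tt N\<close>
    by (simp add: indep_var_nn_integral comp_def)
qed simp

definition first_passage :: "(nat \<Rightarrow> real) \<Rightarrow> real \<Rightarrow> nat \<Rightarrow> bool" where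
  "first_passage x c k \<longleftrightarrow> c < x k \<and> (\<forall>j<k. x j \<le> c)"

lemma first_passage_unique: "first_passage x c k \<Longrightarrow> first_passage x c k' \<Longrightarrow> k = k'"
  unfolding first_passage_def by (metis linorder_neqE_nat not_le)

lemma first_passage_exists: "c < x j \<Longrightarrow> \<exists>k\<le>j. first_passage x c k"
  unfolding first_passage_def
  by (rule exI[of _ "LEAST k. c < x k"]) (auto intro: Least_le LeastI dest: not_less_Least)

lemma first_passage_cong: "(\<And>j. j \<le> k \<Longrightarrow> x j = y j) \<Longrightarrow> first_passage x c k = first_passage y c k"
  unfolding first_passage_def by auto

text \<open>The submartingale property of \<open>exp (l (\<sigma> W - c))\<close>, evaluated on a first passage event.\<close>
lemma std_BM_first_passage_le_nn_integral:
  fixes \<sigma> c :: real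
  assumes BM: "std_BM M W" and tt: "strict_mono tt" "tt 0 = 0" and "k \<le> N" and "0 \<le> l"
  defines "A \<equiv> {\<omega>\<in>space M. first_passage (\<lambda>j. \<sigma> * W (tt j) \<omega>) c k}"
  shows "emeasure M A \<le> (\<integral>\<^sup>+\<omega>. indicator A \<omega> * ennreal (exp (l * (\<sigma> * W (tt N) \<omega> - c))) \<partial>M)"
proof -
  interpret prob_space M using std_BMD(1)[OF BM] .
  have [measurable]: "W (tt j) \<in> borel_measurable M" for j
    using std_BMD(2)[OF BM] strict_mono_less_eq[OF tt(1), of 0 j] tt(2) by simp
  have [measurable]: "A \<in> sets M" unfolding A_def first_passage_def by measurable
  \<comment> \<open>The sums are written over \<open>{..<k}\<close> so that measurability on \<open>PiM {..<k}\<close> is automatic.\<close>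
  define S where "S j x = (\<Sum>i<k. if i < j then x i else 0)" for j and x :: "nat \<Rightarrow> real"
  define F where "F x = (if first_passage (\<lambda>j. \<sigma> * S j x) c k
    then ennreal (exp (l * (\<sigma> * S k x - c))) else 0)" for x
  have F_measurable: "F \<in> borel_measurable (PiM {..<k} (\<lambda>_. borel))"
    unfolding F_def S_def first_passage_def by measurable
  have F_eq: "F (grid_increments W tt k \<omega>) = indicator A \<omega> * ennreal (exp (l * (\<sigma> * W (tt k) \<omega> - c)))"
    if "\<omega> \<in> space M" for \<omega>
  proof -
    have S_eq: "S j (grid_increments W tt k \<omega>) = W (tt j) \<omega>" if "j \<le> k" for j
    proof -
      have "{..<k} \<inter> {i. i < j} = {..<j}" using that by auto
      then show ?thesis
        using std_BM_grid_eq_sum_increments[of M W tt, OF BM tt(2) \<open>\<omega> \<in> space M\<close> that]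
        by (simp add: S_def sum.If_cases)
    qed
    then have "first_passage (\<lambda>j. \<sigma> * S j (grid_increments W tt k \<omega>)) c k
        = first_passage (\<lambda>j. \<sigma> * W (tt j) \<omega>) c k"
      by (intro first_passage_cong) simp
    then show ?thesis
      using that S_eq[of k] by (simp add: F_def A_def)
  qed
  have "emeasure M A = (\<integral>\<^sup>+\<omega>. indicator A \<omega> \<partial>M)" by simp
  also have "\<dots> \<le> (\<integral>\<^sup>+\<omega>. indicator A \<omega> * ennreal (exp (l * (\<sigma> * W (tt k) \<omega> - c))) \<partial>M)"
    using \<open>0 \<le> l\<close> by (intro nn_integral_mono) (auto simp: A_def first_passage_def indicator_def)
  also have "\<dots> = (\<integral>\<^sup>+\<omega>. F (grid_increments W tt k \<omega>) \<partial>M)"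
    by (intro nn_integral_cong) (simp add: F_eq)
  also have "\<dots> \<le> (\<integral>\<^sup>+\<omega>. F (grid_increments W tt k \<omega>) \<partial>M) * ennreal (exp ((l * \<sigma>)\<^sup>2 * (tt N - tt k) / 2))"
  proof -
    have "1 \<le> ennreal (exp ((l * \<sigma>)\<^sup>2 * (tt N - tt k) / 2))"
      using strict_mono_less_eq[OF tt(1)] \<open>k \<le> N\<close> by simp
    from mult_left_mono[OF this] show ?thesis by simp
  qed
  also have "\<dots> = (\<integral>\<^sup>+\<omega>. F (grid_increments W tt k \<omega>) * ennreal (exp ((l * \<sigma>) * (W (tt N) \<omega> - W (tt k) \<omega>))) \<partial>M)"
    by (rule std_BM_nn_integral_mult_exp_increment[OF BM tt \<open>k \<le> N\<close> F_measurable, symmetric])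
  also have "\<dots> = (\<integral>\<^sup>+\<omega>. indicator A \<omega> * ennreal (exp (l * (\<sigma> * W (tt N) \<omega> - c))) \<partial>M)"
    by (intro nn_integral_cong)
       (simp add: F_eq mult.assoc ennreal_mult''[symmetric] exp_add[symmetric] algebra_simps)
  finally show ?thesis .
qed

lemma std_BM_grid_max_tail_exp:
  fixes tt :: "nat \<Rightarrow> real" and W :: "real \<Rightarrow> 'a \<Rightarrow> real"
  assumes BM: "std_BM M W" and tt: "strict_mono tt" "tt 0 = 0" and "0 < N" and "0 \<le> l"
    and \<sigma>: "\<sigma> = 1 \<or> \<sigma> = -1"
  shows "emeasure M {\<omega>\<in>space M. \<exists>j\<le>N. c < \<sigma> * W (tt j) \<omega>} \<le> ennreal (exp (- l * c + l\<^sup>2 * tt N / 2))"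
proof -
  interpret prob_space M using std_BMD(1)[OF BM] .
  have [measurable]: "W (tt j) \<in> borel_measurable M" for j
    using std_BMD(2)[OF BM] strict_mono_less_eq[OF tt(1), of 0 j] tt(2) by simp
  define A where "A k = {\<omega>\<in>space M. first_passage (\<lambda>j. \<sigma> * W (tt j) \<omega>) c k}" for k
  have [measurable]: "A k \<in> sets M" for k unfolding A_def first_passage_def by measurable
  define e where "e \<omega> = ennreal (exp (l * (\<sigma> * W (tt N) \<omega> - c)))" for \<omega>
  have cover: "{\<omega>\<in>space M. \<exists>j\<le>N. c < \<sigma> * W (tt j) \<omega>} \<subseteq> (\<Union>k\<le>N. A k)"
    using first_passage_exists by (fastforce simp: A_def)
  have "disjoint_family_on A {..N}"
    by (auto simp: disjoint_family_on_def A_def dest: first_passage_unique)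
  then have disjoint: "(\<Sum>k\<le>N. indicator (A k) \<omega> * e \<omega>) \<le> e \<omega>" for \<omega>
    by (simp add: sum_distrib_right[symmetric] indicator_UN_disjoint[symmetric]) (simp add: indicator_def)
  have "0 < tt N" using strict_mono_less[OF tt(1), of 0 N] tt(2) \<open>0 < N\<close> by simp
  have "emeasure M {\<omega>\<in>space M. \<exists>j\<le>N. c < \<sigma> * W (tt j) \<omega>} \<le> emeasure M (\<Union>k\<le>N. A k)"
    by (rule emeasure_mono[OF cover]) measurable
  also have "\<dots> \<le> (\<Sum>k\<le>N. emeasure M (A k))"
    by (rule emeasure_subadditive_finite) auto
  also have "\<dots> \<le> (\<Sum>k\<le>N. \<integral>\<^sup>+\<omega>. indicator (A k) \<omega> * e \<omega> \<partial>M)"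
    unfolding A_def e_def by (intro sum_mono std_BM_first_passage_le_nn_integral[OF BM tt]) (use \<open>0 \<le> l\<close> in auto)
  also have "\<dots> = (\<integral>\<^sup>+\<omega>. (\<Sum>k\<le>N. indicator (A k) \<omega> * e \<omega>) \<partial>M)"
    by (rule nn_integral_sum[symmetric]) (auto simp: e_def)
  also have "\<dots> \<le> (\<integral>\<^sup>+\<omega>. e \<omega> \<partial>M)"
    by (intro nn_integral_mono disjoint)
  also have "\<dots> = (\<integral>\<^sup>+\<omega>. ennreal (exp (- l * c)) * ennreal (exp ((l * \<sigma>) * W (tt N) \<omega>)) \<partial>M)"
    by (intro nn_integral_cong) (simp add: e_def ennreal_mult''[symmetric] exp_add[symmetric] algebra_simps)
  also have "\<dots> = ennreal (exp (- l * c)) * ennreal (exp ((l * \<sigma>)\<^sup>2 * tt N / 2))"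
    by (simp add: nn_integral_cmult std_BM_nn_integral_exp[OF BM \<open>0 < tt N\<close>])
  also have "\<dots> = ennreal (exp (- l * c + l\<^sup>2 * tt N / 2))"
    using \<sigma> by (auto simp: ennreal_mult''[symmetric] exp_add[symmetric] power_mult_distrib)
  finally show ?thesis .
qed

lemma std_BM_dyadic_max_tail:
  fixes W :: "real \<Rightarrow> 'a \<Rightarrow> real"
  assumes BM: "std_BM M W" and "0 < t" "0 \<le> c" and \<sigma>: "\<sigma> = 1 \<or> \<sigma> = -1"
  shows "measure M {\<omega>\<in>space M. \<exists>j\<le>(2::nat)^m. c < \<sigma> * W (real j * t / 2^m) \<omega>} \<le> exp (- c\<^sup>2 / (2 * t))"
proof -
  interpret prob_space M using std_BMD(1)[OF BM] .
  define tt where "tt j = real j * t / 2^m" for j :: nat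
  have "strict_mono tt"
    unfolding tt_def using \<open>0 < t\<close> by (intro strict_monoI) (simp add: divide_strict_right_mono)
  \<comment> \<open>\<open>l = c / t\<close> minimises the exponent \<open>- l c + l\<^sup>2 t / 2\<close>.\<close>
  then have "emeasure M {\<omega>\<in>space M. \<exists>j\<le>2^m. c < \<sigma> * W (tt j) \<omega>}
      \<le> ennreal (exp (- (c/t) * c + (c/t)\<^sup>2 * tt (2^m) / 2))"
    by (rule std_BM_grid_max_tail_exp[OF BM _ _ _ _ \<sigma>]) (use \<open>0 < t\<close> \<open>0 \<le> c\<close> in \<open>auto simp: tt_def\<close>)
  also have "- (c/t) * c + (c/t)\<^sup>2 * tt (2^m) / 2 = - c\<^sup>2 / (2 * t)"
    using \<open>0 < t\<close> by (simp add: tt_def field_simps power2_eq_square)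
  finally show ?thesis by (simp add: emeasure_eq_measure tt_def)
qed

definition dyadic_bounded :: "'a measure \<Rightarrow> (real \<Rightarrow> 'a \<Rightarrow> real) \<Rightarrow> real \<Rightarrow> real \<Rightarrow> 'a set" where
  "dyadic_bounded M W t c = {\<omega>\<in>space M. \<forall>m. \<forall>j\<le>(2::nat)^m. \<bar>W (real j * t / 2^m) \<omega>\<bar> \<le> c}"

lemma std_BM_dyadic_bounded_measure:
  fixes W :: "real \<Rightarrow> 'a \<Rightarrow> real"
  assumes BM: "std_BM M W" and t: "0 < t" and c: "0 \<le> c"
  shows "1 - 2 * exp (- c\<^sup>2 / (2 * t)) \<le> measure M (dyadic_bounded M W t c)"
proof -
  interpret prob_space M using std_BMD(1)[OF BM] .
  have [measurable]: "W (real j * t / 2^m) \<in> borel_measurable M" for j m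
    using std_BMD(2)[OF BM, of "real j * t / 2^m"] t by simp
  define E where "E m = {\<omega>\<in>space M. \<forall>j\<le>(2::nat)^m. \<bar>W (real j * t / 2^m) \<omega>\<bar> \<le> c}" for m :: nat
  have E_sets[measurable]: "E m \<in> sets M" for m unfolding E_def by measurable
  have "decseq E"
  proof (rule decseq_SucI)
    fix m
    have "\<bar>W (real j * t / 2^m) \<omega>\<bar> \<le> c" if "\<omega> \<in> E (Suc m)" "j \<le> 2^m" for j \<omega>
      using that by (auto simp: E_def dest!: spec[of _ "2 * j"])
    then show "E (Suc m) \<subseteq> E m" by (auto simp: E_def)
  qed
  have E_measure: "1 - 2 * exp (- c\<^sup>2 / (2 * t)) \<le> measure M (E m)" for m
  proof -
    define B where "B \<sigma> = {\<omega>\<in>space M. \<exists>j\<le>(2::nat)^m. c < \<sigma> * W (real j * t / 2^m) \<omega>}" for \<sigma> :: real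
    have [measurable]: "B \<sigma> \<in> sets M" for \<sigma> unfolding B_def by measurable
    have "space M - E m \<subseteq> B 1 \<union> B (-1)" by (auto simp: E_def B_def abs_if not_le)
    then have "measure M (space M - E m) \<le> measure M (B 1 \<union> B (-1))" by (intro finite_measure_mono) auto
    also have "\<dots> \<le> measure M (B 1) + measure M (B (-1))" by (rule measure_subadditive) auto
    also have "\<dots> \<le> exp (- c\<^sup>2 / (2 * t)) + exp (- c\<^sup>2 / (2 * t))"
      unfolding B_def by (intro add_mono std_BM_dyadic_max_tail[OF BM t c]) auto
    finally show ?thesis using prob_compl[OF E_sets[of m]] by simp
  qed
  have "(\<lambda>m. measure M (E m)) \<longlonglongrightarrow> measure M (\<Inter>m. E m)"
    by (rule finite_Lim_measure_decseq) (use \<open>decseq E\<close> in auto)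
  then have "1 - 2 * exp (- c\<^sup>2 / (2 * t)) \<le> measure M (\<Inter>m. E m)"
    by (rule LIMSEQ_le_const) (use E_measure in auto)
  also have "(\<Inter>m. E m) = dyadic_bounded M W t c"
    by (auto simp: E_def dyadic_bounded_def)
  finally show ?thesis .
qed

lemma abs_le_if_dyadic_abs_le:
  fixes w :: "real \<Rightarrow> real"
  assumes w: "continuous_on {0..t} w" and "0 < t"
    and dyadic: "\<And>m j. j \<le> (2::nat)^m \<Longrightarrow> \<bar>w (real j * t / 2^m)\<bar> \<le> c"
    and r: "r \<in> {0..t}"
  shows "\<bar>w r\<bar> \<le> c"
proof -
  define D where "D = {0..1} \<inter> (\<Union>k m. {real m / 2^k :: real})"
  have closure_D: "closure D = {0..1}"
    unfolding D_def by (subst closure_dyadic_rationals_in_convex_set_pos_1) auto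
  have "continuous_on (closure D) (\<lambda>s. w (t * s))"
    unfolding closure_D using \<open>0 < t\<close>
    by (intro continuous_on_compose2[OF w] continuous_intros) (auto simp: mult_le_cancel_left1)
  moreover have "\<forall>s\<in>D. norm (w (t * s)) \<le> c"
  proof
    fix s assume "s \<in> D"
    then obtain k m where s: "s = real m / 2^k" and "real m / 2^k \<le> 1" by (auto simp: D_def)
    then have "m \<le> 2^k" by (simp add: field_simps flip: of_nat_le_iff)
    then show "norm (w (t * s)) \<le> c"
      using dyadic[of m k] s by (simp add: mult.commute)
  qed
  moreover have "r / t \<in> closure D"
    unfolding closure_D using r \<open>0 < t\<close> by auto
  ultimately have "norm (w (t * (r / t))) \<le> c"
    by (rule continuous_on_closure_norm_le)
  then show ?thesis using \<open>0 < t\<close> by simp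
qed

lemma continuous_first_hit_below:
  fixes f :: "real \<Rightarrow> real"
  assumes f: "continuous_on {a..b} f" and "a \<le> b" "f b \<le> y" "y \<le> f a"
  shows "\<exists>u\<in>{a..b}. f u = y \<and> (\<forall>r\<in>{a..<u}. y < f r)"
proof -
  define S where "S = {a..b} \<inter> f -` {..y}"
  have "closed S" unfolding S_def by (intro continuous_closed_preimage f) auto
  have "b \<in> S" "bdd_below S" using assms by (auto simp: S_def)
  define u where "u = Inf S"
  have "u \<in> S" unfolding u_def using \<open>closed S\<close> \<open>b \<in> S\<close> \<open>bdd_below S\<close> by (intro closed_contains_Inf) auto
  have above: "y < f r" if "r \<in> {a..<u}" for r
  proof (rule ccontr)
    assume "\<not> y < f r"
    then have "r \<in> S" using that \<open>u \<in> S\<close> by (auto simp: S_def)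
    then have "u \<le> r" unfolding u_def using \<open>bdd_below S\<close> by (rule cInf_lower)
    then show False using that by simp
  qed
  obtain x where "a \<le> x" "x \<le> u" "f x = y"
    using IVT2'[of f u y a] \<open>u \<in> S\<close> assms continuous_on_subset[OF f] by (auto simp: S_def)
  then have "f u = y" using above by (cases "x < u") auto
  then show ?thesis using \<open>u \<in> S\<close> above by (auto simp: S_def)
qed

lemma continuous_last_hit_above:
  fixes f :: "real \<Rightarrow> real"
  assumes f: "continuous_on {a..b} f" and "a \<le> b" "f b \<le> y" "y \<le> f a"
  shows "\<exists>s\<in>{a..b}. f s = y \<and> (\<forall>r\<in>{s<..b}. f r < y)"
proof -
  define S where "S = {a..b} \<inter> f -` {y..}"
  have "closed S" unfolding S_def by (intro continuous_closed_preimage f) auto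
  have "a \<in> S" "bdd_above S" using assms by (auto simp: S_def)
  define s where "s = Sup S"
  have "s \<in> S" unfolding s_def using \<open>closed S\<close> \<open>a \<in> S\<close> \<open>bdd_above S\<close> by (intro closed_contains_Sup) auto
  have below: "f r < y" if "r \<in> {s<..b}" for r
  proof (rule ccontr)
    assume "\<not> f r < y"
    then have "r \<in> S" using that \<open>s \<in> S\<close> by (auto simp: S_def)
    then have "r \<le> s" unfolding s_def using \<open>bdd_above S\<close> by (rule cSup_upper)
    then show False using that by simp
  qed
  obtain x where "s \<le> x" "x \<le> b" "f x = y"
    using IVT2'[of f b y s] \<open>s \<in> S\<close> assms continuous_on_subset[OF f] by (auto simp: S_def)
  then have "f s = y" using below by (cases "s < x") auto
  then show ?thesis using \<open>s \<in> S\<close> below by (auto simp: S_def)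
qed

lemma continuous_downcrossing:
  fixes f :: "real \<Rightarrow> real"
  assumes f: "continuous_on {a..b} f" and "a \<le> b" "f b \<le> lo" "lo \<le> hi" "hi \<le> f a"
  obtains s u where "a \<le> s" "s \<le> u" "u \<le> b" "f s = hi" "f u = lo"
    "\<And>r. s \<le> r \<Longrightarrow> r \<le> u \<Longrightarrow> lo \<le> f r \<and> f r \<le> hi"
proof -
  have "lo \<le> f a" using assms by linarith
  then obtain u where u: "u \<in> {a..b}" "f u = lo" "\<And>r. r \<in> {a..<u} \<Longrightarrow> lo < f r"
    using continuous_first_hit_below[OF f \<open>a \<le> b\<close> \<open>f b \<le> lo\<close>] by auto
  have "continuous_on {a..u} f" using continuous_on_subset[OF f] u(1) by auto
  then obtain s where s: "s \<in> {a..u}" "f s = hi" "\<And>r. r \<in> {s<..u} \<Longrightarrow> f r < hi"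
    using continuous_last_hit_above[of a u f hi] u assms by auto
  have "lo \<le> f r \<and> f r \<le> hi" if "s \<le> r" "r \<le> u" for r
    using that s u by (cases "r = u"; cases "r = s") (auto intro: less_imp_le)
  then show ?thesis using that s u by auto
qed

lemma no_explosion_if_small_noise:
  fixes q w :: "real \<Rightarrow> real" and b :: "real \<Rightarrow> real \<Rightarrow> real"
  assumes "0 < T"
    and q_cont: "continuous_on {0<..<T} q"
    and q_eq: "\<And>s r. 0 < s \<Longrightarrow> s \<le> r \<Longrightarrow> r < T \<Longrightarrow>
      q r = q s + (w r - w s) + integral {s..r} (\<lambda>x. b x (q x))"
    and b_integrable: "\<And>s r. 0 < s \<Longrightarrow> s \<le> r \<Longrightarrow> r < T \<Longrightarrow> (\<lambda>x. b x (q x)) integrable_on {s..r}"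
    and b_nonneg: "\<And>r x. 0 < r \<Longrightarrow> lo \<le> x \<Longrightarrow> x \<le> hi \<Longrightarrow> 0 \<le> b r x"
    and w_small: "\<And>r. 0 < r \<Longrightarrow> r < T \<Longrightarrow> \<bar>w r\<bar> \<le> c" and "2 * c < hi - lo"
    and q_top: "filterlim q at_top (at_right 0)" and q_bot: "filterlim q at_bot (at_left T)"
  shows False
proof -
  have "\<forall>\<^sub>F r in at_left T. q r \<le> lo" using q_bot by (simp add: filterlim_at_bot)
  then have "\<forall>\<^sub>F r in at_left T. q r \<le> lo \<and> r \<in> {0<..<T}"
    using eventually_at_left_real[OF \<open>0 < T\<close>] by (rule eventually_conj)
  then obtain v where v: "q v \<le> lo" "0 < v" "v < T" by (auto dest: eventually_happens)
  have "\<forall>\<^sub>F r in at_right 0. hi \<le> q r" using q_top by (simp add: filterlim_at_top)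
  then have "\<forall>\<^sub>F r in at_right 0. hi \<le> q r \<and> r \<in> {0<..<v}"
    using eventually_at_right_real[OF \<open>0 < v\<close>] by (rule eventually_conj)
  then obtain p where p: "hi \<le> q p" "0 < p" "p < v" by (auto dest: eventually_happens)
  have "0 \<le> c" using w_small[of p] p v by linarith
  have "continuous_on {p..v} q" using p v by (intro continuous_on_subset[OF q_cont]) auto
  then obtain s u where crossing: "p \<le> s" "s \<le> u" "u \<le> v" "q s = hi" "q u = lo"
      and band: "\<And>r. s \<le> r \<Longrightarrow> r \<le> u \<Longrightarrow> lo \<le> q r \<and> q r \<le> hi"
    using continuous_downcrossing[of p v q lo hi] p v \<open>0 \<le> c\<close> \<open>2 * c < hi - lo\<close> by auto
  have "0 \<le> integral {s..u} (\<lambda>x. b x (q x))"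
    using crossing p v by (intro integral_nonneg b_integrable) (auto intro: b_nonneg dest: band)
  moreover have "q u = q s + (w u - w s) + integral {s..u} (\<lambda>x. b x (q x))"
    using crossing p v by (intro q_eq) auto
  moreover have "\<bar>w u\<bar> \<le> c" "\<bar>w s\<bar> \<le> c" using crossing p v by (auto intro: w_small)
  ultimately show False using crossing \<open>2 * c < hi - lo\<close> by linarith
qed

text \<open>The threshold for \<open>\<beta>\<close> makes \<open>exp (- \<mu> / (4 \<beta>)) < a / 2\<close>, which bounds both
  exponentials of the drift on the band.\<close>
lemma drift_nonneg:
  assumes "0 < a" and "0 < \<beta>" "\<beta> < \<mu> / (4 * (\<bar>ln (a/2)\<bar> + 1))"
    and "-3*\<mu>/4 \<le> x" "x \<le> -\<mu>/4" and "0 < r"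
  shows "0 \<le> drift a \<mu> \<beta> r x"
proof -
  have "\<bar>ln (a/2)\<bar> + 1 < \<mu> / (4 * \<beta>)"
    using assms(2,3) by (simp add: field_simps add_pos_nonneg)
  then have "- (\<mu> / (4 * \<beta>)) < ln (a/2)" by linarith
  then have "exp (- (\<mu> / (4 * \<beta>))) < a / 2"
    using \<open>0 < a\<close> by (metis exp_less_cancel_iff exp_ln half_gt_zero)
  moreover have "exp (x / \<beta>) \<le> exp (- (\<mu> / (4 * \<beta>)))"
    using assms(2,5) by (simp add: field_simps)
  moreover have "exp (- (x + r / 4 + \<mu>) / \<beta>) \<le> exp (- (\<mu> / (4 * \<beta>)))"
    using assms(2,4,6) by (simp add: field_simps)
  ultimately have "0 \<le> a - exp (x / \<beta>) - exp (- (x + r / 4 + \<mu>) / \<beta>)" by linarith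
  then show ?thesis unfolding drift_def by simp
qed

lemma entrance_sol_survives_dyadic_bounded:
  assumes BM: "std_BM M W" and ES: "entrance_sol a \<mu> \<beta> M W q \<xi>" and "0 < \<beta>" "0 < t"
    and drift_nonneg: "\<And>r x. 0 < r \<Longrightarrow> lo \<le> x \<Longrightarrow> x \<le> hi \<Longrightarrow> 0 \<le> drift a \<mu> \<beta> r x"
    and "2 * c < hi - lo"
  shows "AE \<omega> in M. \<omega> \<in> dyadic_bounded M W t c \<longrightarrow> ereal t < \<xi> \<omega>"
proof -
  have "AE \<omega> in M. 0 < \<xi> \<omega> \<and>
        continuous_on {t. 0 < t \<and> ereal t < \<xi> \<omega>} (\<lambda>t. q t \<omega>) \<and>
        (\<forall>s t. 0 < s \<and> s \<le> t \<and> ereal t < \<xi> \<omega> \<longrightarrow>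
           q t \<omega> = q s \<omega> + (W t \<omega> - W s \<omega>) + integral {s..t} (\<lambda>r. drift a \<mu> \<beta> r (q r \<omega>))) \<and>
        filterlim (\<lambda>t. q t \<omega>) at_top (at_right 0) \<and>
        (\<xi> \<omega> < \<infinity> \<longrightarrow> filterlim (\<lambda>t. q t \<omega>) at_bot (at_left (real_of_ereal (\<xi> \<omega>))))"
    using ES unfolding entrance_sol_def by blast
  then show ?thesis
    using std_BMD(4)[OF BM]
  proof eventually_elim
    case (elim \<omega>)
    show ?case
    proof (intro impI, rule ccontr)
      assume bounded: "\<omega> \<in> dyadic_bounded M W t c" and "\<not> ereal t < \<xi> \<omega>"
      then obtain T where T: "\<xi> \<omega> = ereal T" "0 < T" "T \<le> t" using elim by (cases "\<xi> \<omega>") auto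
      have "{r. 0 < r \<and> ereal r < \<xi> \<omega>} = {0<..<T}" using T by auto
      then have q_cont: "continuous_on {0<..<T} (\<lambda>r. q r \<omega>)" using elim by simp
      have W_cont: "continuous_on {0..t} (\<lambda>r. W r \<omega>)"
        using elim(2) by (rule continuous_on_subset) auto
      have W_small: "\<bar>W r \<omega>\<bar> \<le> c" if "0 < r" "r < T" for r
        by (rule abs_le_if_dyadic_abs_le[OF W_cont \<open>0 < t\<close>])
           (use bounded that T in \<open>auto simp: dyadic_bounded_def\<close>)
      have drift_integrable: "(\<lambda>x. drift a \<mu> \<beta> x (q x \<omega>)) integrable_on {s..r}"
        if "0 < s" "s \<le> r" "r < T" for s r
      proof (rule integrable_continuous_interval)
        have "continuous_on {s..r} (\<lambda>x. q x \<omega>)"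
          using that by (intro continuous_on_subset[OF q_cont]) auto
        then show "continuous_on {s..r} (\<lambda>x. drift a \<mu> \<beta> x (q x \<omega>))"
          unfolding drift_def using \<open>0 < \<beta>\<close> by (intro continuous_intros) auto
      qed
      show False
        by (rule no_explosion_if_small_noise[of T "\<lambda>r. q r \<omega>" "\<lambda>r. W r \<omega>" "drift a \<mu> \<beta>" lo hi c])
           (use T elim q_cont W_small drift_integrable drift_nonneg \<open>2 * c < hi - lo\<close> in auto)
    qed
  qed
qed

lemma ex_level_below_quarter:
  fixes \<mu> t :: real
  assumes "0 < \<mu>" "0 < t"
  obtains c where "0 < c" "c < \<mu>/4" "exp (- c\<^sup>2 / (2 * t)) \<le> 2 * exp (- \<mu>\<^sup>2 / (32 * t))"
proof
  \<comment> \<open>For \<open>c\<^sup>2 = \<mu>\<^sup>2/16 - 2t ln 2\<close> the last inequality is an equality; the \<open>max\<close> keeps \<open>c\<close> positive.\<close>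
  define v where "v = max (\<mu>\<^sup>2/16 - 2 * t * ln 2) (\<mu>\<^sup>2/64)"
  have "0 < v" using assms by (simp add: v_def less_max_iff_disj)
  show "0 < sqrt v" using \<open>0 < v\<close> by simp
  have "0 < t * ln 2" "0 < \<mu>\<^sup>2" using assms by simp_all
  then have "v < \<mu>\<^sup>2/16" unfolding v_def by linarith
  then have "v < (\<mu>/4)\<^sup>2" by (simp add: power_divide)
  then show "sqrt v < \<mu>/4" using real_sqrt_less_mono assms by fastforce
  have "\<mu>\<^sup>2/16 - 2 * t * ln 2 \<le> (sqrt v)\<^sup>2" using \<open>0 < v\<close> by (simp add: v_def)
  then have "- (sqrt v)\<^sup>2 / (2 * t) \<le> ln 2 + (- \<mu>\<^sup>2 / (32 * t))"
    using assms by (simp add: field_simps)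
  then have "exp (- (sqrt v)\<^sup>2 / (2 * t)) \<le> exp (ln 2 + (- \<mu>\<^sup>2 / (32 * t)))" by (rule exp_mono)
  also have "\<dots> = 2 * exp (- \<mu>\<^sup>2 / (32 * t))" by (simp only: exp_add) simp
  finally show "exp (- (sqrt v)\<^sup>2 / (2 * t)) \<le> 2 * exp (- \<mu>\<^sup>2 / (32 * t))" .
qed

theorem lemma5p1:
  fixes a \<mu> :: real
  assumes "a > 0" and "\<mu> > 0"
  shows "\<exists>\<beta>0>0. \<forall>\<beta>. 0 < \<beta> \<and> \<beta> < \<beta>0 \<longrightarrow>
           (\<forall>(M :: 'a measure) W q \<xi>. std_BM M W \<and> entrance_sol a \<mu> \<beta> M W q \<xi> \<longrightarrow>
              (\<forall>t>0. measure M {\<omega> \<in> space M. ereal t < \<xi> \<omega>}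
                        \<ge> 1 - 4 * exp (- \<mu>\<^sup>2 / (32 * t))))"
proof (intro exI[of _ "\<mu> / (4 * (\<bar>ln (a/2)\<bar> + 1))"] conjI allI impI)
  show "0 < \<mu> / (4 * (\<bar>ln (a/2)\<bar> + 1))" using assms by (simp add: add_pos_nonneg)
  fix \<beta> :: real and M :: "'a measure" and W q \<xi> and t :: real
  assume \<beta>: "0 < \<beta> \<and> \<beta> < \<mu> / (4 * (\<bar>ln (a/2)\<bar> + 1))"
    and sol: "std_BM M W \<and> entrance_sol a \<mu> \<beta> M W q \<xi>" and "0 < t"
  then have BM: "std_BM M W" and ES: "entrance_sol a \<mu> \<beta> M W q \<xi>" by auto
  interpret prob_space M using std_BMD(1)[OF BM] .
  obtain c where c: "0 < c" "c < \<mu>/4" "exp (- c\<^sup>2 / (2 * t)) \<le> 2 * exp (- \<mu>\<^sup>2 / (32 * t))"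
    using ex_level_below_quarter[OF \<open>\<mu> > 0\<close> \<open>0 < t\<close>] .
  have "AE \<omega> in M. \<omega> \<in> dyadic_bounded M W t c \<longrightarrow> ereal t < \<xi> \<omega>"
    using drift_nonneg[OF \<open>a > 0\<close>] \<beta> c(2) \<open>0 < t\<close>
    by (intro entrance_sol_survives_dyadic_bounded[OF BM ES, of t "-3*\<mu>/4" "-\<mu>/4"]) auto
  then have "AE \<omega> in M. \<omega> \<in> dyadic_bounded M W t c \<longrightarrow> \<omega> \<in> {\<omega> \<in> space M. ereal t < \<xi> \<omega>}"
    by eventually_elim (auto simp: dyadic_bounded_def)
  moreover have "\<xi> \<in> borel_measurable M" using ES by (simp add: entrance_sol_def)
  ultimately have "measure M (dyadic_bounded M W t c) \<le> measure M {\<omega> \<in> space M. ereal t < \<xi> \<omega>}"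
    by (intro finite_measure_mono_AE) auto
  then show "measure M {\<omega> \<in> space M. ereal t < \<xi> \<omega>} \<ge> 1 - 4 * exp (- \<mu>\<^sup>2 / (32 * t))"
    using std_BM_dyadic_bounded_measure[OF BM \<open>0 < t\<close>, of c] c by linarith
qed

end
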